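(* In the setting described in the context, all initial stabilizers in the decoding subgraph of a reliable logical Pauli product are $+1$.
   Context: Setting: logical qubits encoded in distance-$d$ unrotated surface codes (CSS codes), each initialized in $|\overline{0}\rangle$ (all physical qubits in $|0\rangle$, so $Z$ stabilizers are $+1$ and $X$ stabilizers are uniformly random), $|\overline{+}\rangle$ (all physical qubits in $|+\rangle$, so $X$ stabilizers are $+1$ and $Z$ stabilizers random), or a magic state $|\overline{T}\rangle$ assumed to have all stabilizers $+1$; followed by transversal logical Clifford gates, each followed by one round of stabilizer measurement (SE), and logical $\overline{Z}$/$\overline{X}$ measurements by measuring all data qubits in $Z$/$X$. Each logical measurement product corresponds to a logical Pauli operator that can be back-propagated through the Clifford circuit. Reliable logical Pauli product: with $n$ logical qubits and $m$ measurements, identify a measurement product with $\vec v\in\mathbb{Z}_2^m$; let $M\in\mathbb{Z}_2^{2n\times m}$ have entry $(i,j)$ (resp. $(n+i,j)$) equal to $1$ iff the back-propagation of measurement $j$ to initialization has an $\overline X$- (resp. $\overline Z$-) component on qubit $i$; let $B$ contain the unit vectors $\vec e_{x,i}$ (position $i$) and $\vec e_{z,i}$ (position $n+i$) if qubit $i$ starts in $|\overline T\rangle$, only $\vec e_{z,i}$ if it starts in $|\overline0\rangle$, only $\vec e_{x,i}$ if it starts in $|\overline+\rangle$. The product is reliable if $M\vec v\in\operatorname{span}B$. Decoding subgraph of a logical Pauli product $\overline P$: back-propagate $\overline P$ through the circuit, giving at each time step $t$ an operator $\overline P^t=\overline O_1^t\otimes\cdots\otimes\overline O_n^t$ with $\overline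 O_j^t\in\{\overline I,\overline X,\overline Y,\overline Z\}$. Include the $X$-stabilizer checks of qubit $j$ at step $t$ if $\overline O_j^t\in\{\overline X,\overline Y\}$ and the $Z$-stabilizer checks if $\overline O_j^t\in\{\overline Z,\overline Y\}$, where a check is the product of a stabilizer measurement outcome with the measured value(s) of its back-propagation through the preceding gate at the previous SE round (at the first round, a deterministically-$+1$ initial stabilizer forms a check by itself). The initial stabilizers of the subgraph are those stabilizers, at initialization, of the qubits and bases included in the subgraph. *)

theory Defs
  imports Main HOL.Modules "HOL-Library.Z2" "HOL-Library.Function_Algebras"
begin

text \<open>Binary symplectic representation of logical Pauli operators (phases ignored)
on n logical qubits: a vector p :: nat => bit, where p i (i < n) is the X-component on
qubit i and p (n + i) is the Z-component on qubit i (coordinates >= 2n unused).\<close>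

type_synonym pvec = "nat \<Rightarrow> bit"

definition scl :: "bit \<Rightarrow> pvec \<Rightarrow> pvec" where
  "scl c p = (\<lambda>i. c * p i)"

definition unitv :: "nat \<Rightarrow> pvec" where
  "unitv k = (\<lambda>i. if i = k then 1 else 0)"

datatype init_state = InitZero | InitPlus | InitT
datatype basis = XB | ZB
datatype pauli1 = PI | PX | PY | PZ

definition op_at :: "nat \<Rightarrow> pvec \<Rightarrow> nat \<Rightarrow> pauli1" where
  "op_at n p j = (if p j = 1 then (if p (n + j) = 1 then PY else PX)
                  else (if p (n + j) = 1 then PZ else PI))"

definition meas_pauli :: "nat \<Rightarrow> basis \<Rightarrow> nat \<Rightarrow> pvec" where
  "meas_pauli n b q = (case b of XB \<Rightarrow> unitv q | ZB \<Rightarrow> unitv (n + q))"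

definition symp :: "nat \<Rightarrow> pvec \<Rightarrow> pvec \<Rightarrow> bit" where
  "symp n p q = (\<Sum>i<n. p i * q (n + i) + p (n + i) * q i)"

definition supp_in :: "nat \<Rightarrow> pvec \<Rightarrow> bool" where
  "supp_in n p \<longleftrightarrow> (\<forall>i\<ge>2*n. p i = 0)"

text \<open>g is the action (on binary symplectic vectors) of back-propagating a Pauli through a
logical Clifford gate: a GF(2)-linear symplectic automorphism of the 2n-dim. space.\<close>
definition clifford_bp :: "nat \<Rightarrow> (pvec \<Rightarrow> pvec) \<Rightarrow> bool" where
  "clifford_bp n g \<longleftrightarrow>
     (\<forall>p q. g (p + q) = g p + g q) \<and>
     (\<forall>p. supp_in n p \<longrightarrow> supp_in n (g p)) \<and>
     bij_betw g {p. supp_in n p} {p. supp_in n p} \<and>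
     (\<forall>p q. supp_in n p \<longrightarrow> supp_in n q \<longrightarrow> symp n (g p) (g q) = symp n p q)"

text \<open>Time steps: 0 = initialization; gate t (1 <= t <= L) maps step t-1 to step t, and is
followed by SE round t.  G t is the back-propagation map of gate t.
bpto G s t p = back-propagation of p from step t to step s (s <= t).\<close>
fun bpto :: "(nat \<Rightarrow> pvec \<Rightarrow> pvec) \<Rightarrow> nat \<Rightarrow> nat \<Rightarrow> pvec \<Rightarrow> pvec" where
  "bpto G s 0 p = p"
| "bpto G s (Suc t) p = (if Suc t \<le> s then p else bpto G s t (G (Suc t) p))"

text \<open>Matrix M: column j is the back-propagation to initialization of measurement j
(qubit mq j, basis mb j, performed at step mt j).\<close>
definition Mmat :: "nat \<Rightarrow> (nat \<Rightarrow> pvec \<Rightarrow> pvec) \<Rightarrow> (nat \<Rightarrow> nat) \<Rightarrow> (nat \<Rightarrow> basis)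
    \<Rightarrow> (nat \<Rightarrow> nat) \<Rightarrow> nat \<Rightarrow> nat \<Rightarrow> bit" where
  "Mmat n G mq mb mt i j = bpto G 0 (mt j) (meas_pauli n (mb j) (mq j)) i"

definition mat_vec :: "(nat \<Rightarrow> nat \<Rightarrow> bit) \<Rightarrow> nat \<Rightarrow> (nat \<Rightarrow> bit) \<Rightarrow> pvec" where
  "mat_vec A m v = (\<lambda>i. \<Sum>j<m. A i j * v j)"

definition Bset :: "nat \<Rightarrow> (nat \<Rightarrow> init_state) \<Rightarrow> pvec set" where
  "Bset n init =
     {unitv i | i. i < n \<and> init i \<in> {InitT, InitPlus}} \<union>
     {unitv (n + i) | i. i < n \<and> init i \<in> {InitT, InitZero}}"

definition reliable :: "nat \<Rightarrow> (nat \<Rightarrow> init_state) \<Rightarrow> (nat \<Rightarrow> pvec \<Rightarrow> pvec) \<Rightarrow> (nat \<Rightarrow> nat)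
    \<Rightarrow> (nat \<Rightarrow> basis) \<Rightarrow> (nat \<Rightarrow> nat) \<Rightarrow> nat \<Rightarrow> (nat \<Rightarrow> bit) \<Rightarrow> bool" where
  "reliable n init G mq mb mt m v \<longleftrightarrow>
     mat_vec (Mmat n G mq mb mt) m v \<in> module.span scl (Bset n init)"

definition meas_at :: "nat \<Rightarrow> (nat \<Rightarrow> nat) \<Rightarrow> (nat \<Rightarrow> basis) \<Rightarrow> (nat \<Rightarrow> nat) \<Rightarrow> nat
    \<Rightarrow> (nat \<Rightarrow> bit) \<Rightarrow> nat \<Rightarrow> pvec" where
  "meas_at n mq mb mt m v t = (\<Sum>j | j < m \<and> mt j = t. scl (v j) (meas_pauli n (mb j) (mq j)))"

text \<open>Step-by-step back-propagation of the logical measurement product selected by v: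
bpstep ... k is the operator P^(L-k).\<close>
fun bpstep :: "nat \<Rightarrow> (nat \<Rightarrow> pvec \<Rightarrow> pvec) \<Rightarrow> (nat \<Rightarrow> nat) \<Rightarrow> (nat \<Rightarrow> basis) \<Rightarrow> (nat \<Rightarrow> nat)
    \<Rightarrow> nat \<Rightarrow> (nat \<Rightarrow> bit) \<Rightarrow> nat \<Rightarrow> nat \<Rightarrow> pvec" where
  "bpstep n G mq mb mt m v L 0 = meas_at n mq mb mt m v L"
| "bpstep n G mq mb mt m v L (Suc k) =
     G (L - k) (bpstep n G mq mb mt m v L k) + meas_at n mq mb mt m v (L - Suc k)"

definition Pt :: "nat \<Rightarrow> (nat \<Rightarrow> pvec \<Rightarrow> pvec) \<Rightarrow> (nat \<Rightarrow> nat) \<Rightarrow> (nat \<Rightarrow> basis) \<Rightarrow> (nat \<Rightarrow> nat)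
    \<Rightarrow> nat \<Rightarrow> (nat \<Rightarrow> bit) \<Rightarrow> nat \<Rightarrow> nat \<Rightarrow> pvec" where
  "Pt n G mq mb mt m v L t = bpstep n G mq mb mt m v L (L - t)"

definition subgraph_init_stabs :: "nat \<Rightarrow> pvec \<Rightarrow> (nat \<times> basis) set" where
  "subgraph_init_stabs n P0 =
     {(j, XB) | j. j < n \<and> op_at n P0 j \<in> {PX, PY}} \<union>
     {(j, ZB) | j. j < n \<and> op_at n P0 j \<in> {PZ, PY}}"

text \<open>Whether all initial stabilizers of type b on logical qubit j are deterministically +1:
|0bar> fixes Z-stabilizers (X random), |+bar> fixes X-stabilizers (Z random),
|Tbar> is assumed to have all stabilizers +1.\<close>
definition init_stab_plus1 :: "(nat \<Rightarrow> init_state) \<Rightarrow> nat \<Rightarrow> basis \<Rightarrow> bool" where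
  "init_stab_plus1 init j b \<longleftrightarrow>
     init j = InitT \<or> (init j = InitZero \<and> b = ZB) \<or> (init j = InitPlus \<and> b = XB)"

end

theory Submission
  imports Defs
begin

text \<open>Because every gate acts linearly on binary symplectic vectors, back-propagating the
measurement product step by step yields at initialization exactly the sum \<open>M v\<close> of the
back-propagated measurements.  Reliability puts \<open>M v\<close> in the span of \<open>B\<close>, and every
vector in that span vanishes on the coordinates outside \<open>B\<close>.  So an \<open>X\<close>- (resp. \<open>Z\<close>-)
component of \<open>P\<^sup>0\<close> on qubit \<open>j\<close> forces the corresponding unit vector into \<open>B\<close>, i.e. qubit
\<open>j\<close> starts in a state whose \<open>X\<close>- (resp. \<open>Z\<close>-) stabilizers are \<open>+1\<close>.\<close>

interpretation pauli: module scl
  by unfold_locales (auto simp: scl_def fun_eq_iff algebra_simps)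

lemma sum_fun_apply: "(\<Sum>a\<in>A. (f a :: 'b \<Rightarrow> 'c::comm_monoid_add)) i = (\<Sum>a\<in>A. f a i)"
  by (induction A rule: infinite_finite_induct) auto

lemma clifford_bp_module_hom:
  assumes "clifford_bp n g"
  shows "module_hom scl scl g"
proof -
  have add: "g (p + q) = g p + g q" for p q
    using assms by (simp add: clifford_bp_def)
  then have "g 0 = 0"
    by (metis add_cancel_right_left)
  moreover have "scl 0 p = 0" and "scl 1 p = p" for p
    by (simp_all add: scl_def fun_eq_iff)
  ultimately have "g (scl c p) = scl c (g p)" for c p
    by (cases c) simp_all
  with add show ?thesis
    by (simp add: module_hom_iff pauli.module_axioms)
qed

lemma bpto_trivial [simp]: "t \<le> s \<Longrightarrow> bpto G s t p = p"
  by (induction t arbitrary: p) auto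

lemma bpto_Suc_start: "s < t \<Longrightarrow> bpto G s t p = G (Suc s) (bpto G (Suc s) t p)"
  by (induction t arbitrary: p) (auto simp: less_Suc_eq)

lemma bpstep_eq_sum_bpto:
  assumes linear: "\<And>t. 1 \<le> t \<Longrightarrow> t \<le> L \<Longrightarrow> module_hom scl scl (G t)"
    and times: "\<And>j. j < m \<Longrightarrow> mt j \<le> L"
    and "k \<le> L"
  shows "bpstep n G mq mb mt m v L k =
    (\<Sum>j | j < m \<and> L - k \<le> mt j. scl (v j) (bpto G (L - k) (mt j) (meas_pauli n (mb j) (mq j))))"
  using \<open>k \<le> L\<close>
proof (induction k)
  case 0
  have "{j. j < m \<and> L \<le> mt j} = {j. j < m \<and> mt j = L}"
    using times by force
  then show ?case
    by (simp add: meas_at_def)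
next
  case (Suc k)
  obtain s where s: "L - k = Suc s" "L - Suc k = s"
    using Suc.prems by (metis Suc_diff_Suc Suc_le_lessD)
  define f where "f t j = scl (v j) (bpto G t (mt j) (meas_pauli n (mb j) (mq j)))" for t j
  interpret gate: module_hom scl scl "G (Suc s)"
    using Suc.prems s by (intro linear) auto
  have "G (Suc s) (f (Suc s) j) = f s j" if "Suc s \<le> mt j" for j
    using that by (simp add: f_def gate.scale bpto_Suc_start)
  then have later: "G (Suc s) (\<Sum>j | j < m \<and> Suc s \<le> mt j. f (Suc s) j) =
      (\<Sum>j | j < m \<and> Suc s \<le> mt j. f s j)"
    by (simp add: gate.sum)
  have now: "meas_at n mq mb mt m v s = (\<Sum>j | j < m \<and> mt j = s. f s j)"
    by (simp add: meas_at_def f_def)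
  have "bpstep n G mq mb mt m v L (Suc k) =
      G (Suc s) (bpstep n G mq mb mt m v L k) + meas_at n mq mb mt m v s"
    by (simp add: s)
  also have "bpstep n G mq mb mt m v L k = (\<Sum>j | j < m \<and> Suc s \<le> mt j. f (Suc s) j)"
    using Suc by (simp add: f_def s)
  also note later
  also note now
  also have "(\<Sum>j | j < m \<and> Suc s \<le> mt j. f s j) + (\<Sum>j | j < m \<and> mt j = s. f s j) =
      (\<Sum>j \<in> {j. j < m \<and> Suc s \<le> mt j} \<union> {j. j < m \<and> mt j = s}. f s j)"
    by (rule sum.union_disjoint[symmetric]) auto
  also have "{j. j < m \<and> Suc s \<le> mt j} \<union> {j. j < m \<and> mt j = s} = {j. j < m \<and> s \<le> mt j}"
    by auto
  finally show ?case
    by (simp add: f_def s)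
qed

lemma Pt_0_eq_mat_vec:
  assumes "\<And>t. 1 \<le> t \<Longrightarrow> t \<le> L \<Longrightarrow> module_hom scl scl (G t)"
    and "\<And>j. j < m \<Longrightarrow> mt j \<le> L"
  shows "Pt n G mq mb mt m v L 0 = mat_vec (Mmat n G mq mb mt) m v"
proof -
  have "Pt n G mq mb mt m v L 0 =
      (\<Sum>j | j < m \<and> L - L \<le> mt j. scl (v j) (bpto G (L - L) (mt j) (meas_pauli n (mb j) (mq j))))"
    unfolding Pt_def diff_zero by (rule bpstep_eq_sum_bpto[OF assms order_refl])
  also have "\<dots> = mat_vec (Mmat n G mq mb mt) m v"
  proof
    fix i
    have "{j. j < m \<and> L - L \<le> mt j} = {..<m}"
      by auto
    then show "(\<Sum>j | j < m \<and> L - L \<le> mt j.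
        scl (v j) (bpto G (L - L) (mt j) (meas_pauli n (mb j) (mq j)))) i =
        mat_vec (Mmat n G mq mb mt) m v i"
      unfolding mat_vec_def Mmat_def sum_fun_apply diff_self_eq_0
      by (intro sum.cong) (simp_all only: scl_def mult.commute)
  qed
  finally show ?thesis .
qed

lemma span_coordinate_eq_0:
  assumes "p \<in> pauli.span S" and "\<And>q. q \<in> S \<Longrightarrow> q k = 0"
  shows "p k = 0"
proof -
  have "pauli.subspace {p. p k = 0}"
    by (auto simp: pauli.subspace_def scl_def)
  then have "pauli.span S \<subseteq> {p. p k = 0}"
    using assms(2) by (intro pauli.span_minimal) auto
  then show ?thesis
    using assms(1) by blast
qed

lemma span_Bset_X_component:
  assumes "p \<in> pauli.span (Bset n init)" and "j < n" and "p j = 1"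
  shows "init j \<in> {InitT, InitPlus}"
proof (rule ccontr)
  assume "init j \<notin> {InitT, InitPlus}"
  with assms(2) have "p j = 0"
    by (intro span_coordinate_eq_0[OF assms(1)]) (auto simp: Bset_def unitv_def)
  with assms(3) show False
    by simp
qed

lemma span_Bset_Z_component:
  assumes "p \<in> pauli.span (Bset n init)" and "j < n" and "p (n + j) = 1"
  shows "init j \<in> {InitT, InitZero}"
proof (rule ccontr)
  assume "init j \<notin> {InitT, InitZero}"
  with assms(2) have "p (n + j) = 0"
    by (intro span_coordinate_eq_0[OF assms(1)]) (auto simp: Bset_def unitv_def)
  with assms(3) show False
    by simp
qed

lemma span_Bset_subgraph_init_stabs_plus1:
  assumes "p \<in> pauli.span (Bset n init)"
  shows "\<forall>(j, b) \<in> subgraph_init_stabs n p. init_stab_plus1 init j b"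
proof clarify
  fix j b
  assume jb: "(j, b) \<in> subgraph_init_stabs n p"
  then have "j < n"
    by (auto simp: subgraph_init_stabs_def)
  show "init_stab_plus1 init j b"
  proof (cases b)
    case XB
    with jb have "p j = 1"
      by (auto simp: subgraph_init_stabs_def op_at_def split: if_splits)
    with XB show ?thesis
      using span_Bset_X_component[OF assms \<open>j < n\<close>] by (auto simp: init_stab_plus1_def)
  next
    case ZB
    with jb have "p (n + j) = 1"
      by (auto simp: subgraph_init_stabs_def op_at_def split: if_splits)
    with ZB show ?thesis
      using span_Bset_Z_component[OF assms \<open>j < n\<close>] by (auto simp: init_stab_plus1_def)
  qed
qed

theorem lemma2:
  fixes n m L :: nat
    and init :: "nat \<Rightarrow> init_state"
    and G :: "nat \<Rightarrow> pvec \<Rightarrow> pvec"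
    and mq :: "nat \<Rightarrow> nat" and mb :: "nat \<Rightarrow> basis" and mt :: "nat \<Rightarrow> nat"
    and v :: "nat \<Rightarrow> bit"
  assumes gates: "\<And>t. 1 \<le> t \<Longrightarrow> t \<le> L \<Longrightarrow> clifford_bp n (G t)"
    and meas_ok: "\<And>j. j < m \<Longrightarrow> mq j < n \<and> mt j \<le> L"
    and rel: "reliable n init G mq mb mt m v"
  shows "\<forall>(j, b) \<in> subgraph_init_stabs n (Pt n G mq mb mt m v L 0). init_stab_plus1 init j b"
proof -
  have "Pt n G mq mb mt m v L 0 = mat_vec (Mmat n G mq mb mt) m v"
    using gates meas_ok by (intro Pt_0_eq_mat_vec clifford_bp_module_hom) auto
  with rel have "Pt n G mq mb mt m v L 0 \<in> pauli.span (Bset n init)"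
    by (simp add: reliable_def)
  then show ?thesis
    by (rule span_Bset_subgraph_init_stabs_plus1)
qed

end
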